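(* Let $g$ be a positive integer, let $l\ge1$, and let $(a,a+g)$ be a consecutive prospective prime pair with gap $g$ in $S_l$. Let $k>l+4$, $0\le m\le P_{k-1}-1$ and $0\le m'\le P_k-1$. Then the number of tuples $(m_{l+1},\dots,m_k)$ of integers with $0\le m_j\le P_j-1$, $m_{k-1}=m$ and $m_k=m'$ such that, with $M=\sum_{j=l+1}^km_jP_{j-1}\#$, both $a+M$ and $a+g+M$ are coprime to $P_k\#$ (i.e. the number of pairs with gap $g$ in the subset $S_k^{(m')}$ generated from the pairs derived from $(a,a+g)$ in the subset $S_{k-1}^{(m)}$) is at least $(P_{k-2}-6)\,\mathring{n}^g_{k-3}$.
   Context: $P_k$ denotes the $k$-th prime ($P_1=2$), $P_k\#=\prod_{i=1}^kP_i$. $S_k=\{N\in\mathbb{N}:5\le N\le4+P_k\#\}$, $S_k^{(m)}=\{N:5+mP_{k-1}\#\le N\le4+(m+1)P_{k-1}\#\}$ for $0\le m\le P_k-1$. A prospective prime in $S_k$ is an $N\in S_k$ coprime to $P_k\#$; prospective primes $a<b$ in $S_k$ are consecutive if no integer strictly between them is coprime to $P_k\#$; a consecutive prospective prime pair with gap $g$ is a pair $(a,a+g)$ of consecutive prospective primes. For $j>l$, $\mathring{n}^g_j=\prod_{i=l+1}^{j}(P_i-2)\prod_{l+1\le i\le j,\,P_i\mid g}\frac{P_i-1}{P_i-2}$. *)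

theory Defs
  imports Complex_Main "HOL-Computational_Algebra.Primes" "HOL-Library.Infinite_Set"
begin

text \<open>P k is the k-th prime, 1-indexed: P 1 = 2, P 2 = 3, ...\<close>
definition P :: "nat \<Rightarrow> nat" where
  "P k = enumerate {p::nat. prime p} (k - 1)"

definition primorial :: "nat \<Rightarrow> nat" where
  "primorial k = (\<Prod>i\<in>{1..k}. P i)"

definition S :: "nat \<Rightarrow> nat set" where
  "S k = {N. 5 \<le> N \<and> N \<le> 4 + primorial k}"

definition prospective_prime :: "nat \<Rightarrow> nat \<Rightarrow> bool" where
  "prospective_prime k N \<longleftrightarrow> N \<in> S k \<and> coprime N (primorial k)"

definition cons_pair :: "nat \<Rightarrow> nat \<Rightarrow> nat \<Rightarrow> bool" where
  "cons_pair k g a \<longleftrightarrow> prospective_prime k a \<and> prospective_prime k (a + g) \<and> 0 < g \<and>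
     (\<forall>n. a < n \<and> n < a + g \<longrightarrow> \<not> coprime n (primorial k))"

definition nring :: "nat \<Rightarrow> nat \<Rightarrow> nat \<Rightarrow> real" where
  "nring l j g = (\<Prod>i\<in>{l+1..j}. real (P i) - 2) *
     (\<Prod>i\<in>{i. l+1 \<le> i \<and> i \<le> j \<and> P i dvd g}. (real (P i) - 1) / (real (P i) - 2))"

end

theory Submission
  imports Defs
begin

text \<open>Write \<open>M = \<Sum> m\<^sub>i P\<^sub>i\<^sub>-\<^sub>1#\<close> in mixed radix. Modulo \<open>P\<^sub>i\<close> the digits beyond \<open>m\<^sub>i\<close> do not
  contribute, and \<open>P\<^sub>i\<close> does not divide \<open>P\<^sub>i\<^sub>-\<^sub>1#\<close>, so each of \<open>a + M\<close>, \<open>a + g + M\<close> is divisible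
  by \<open>P\<^sub>i\<close> for at most one choice of \<open>m\<^sub>i < P\<^sub>i\<close>. Adding the digits one at a time, every
  surviving tuple therefore has at least \<open>P\<^sub>i - 2\<close> surviving extensions (\<open>P\<^sub>i - 1\<close> if \<open>P\<^sub>i\<close>
  divides \<open>g\<close>), which gives \<open>n\<^sup>g\<^sub>k\<^sub>-\<^sub>3\<close> surviving tuples up to \<open>k - 3\<close>. With the last two digits
  fixed, the digit \<open>m\<^sub>k\<^sub>-\<^sub>2\<close> must avoid at most one value for each of the six pairs
  (prime \<open>P\<^sub>k\<^sub>-\<^sub>2, P\<^sub>k\<^sub>-\<^sub>1, P\<^sub>k\<close>, number \<open>a\<close> or \<open>a + g\<close>). Coprimality to \<open>P\<^sub>1, \<dots>, P\<^sub>l\<close> is inherited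
  from \<open>(a, a + g)\<close> because \<open>P\<^sub>l#\<close> divides \<open>M\<close>.\<close>

lemma prime_P: "prime (P i)"
  unfolding P_def using enumerate_in_set[OF primes_infinite] by simp

lemma P_ge_2: "2 \<le> P i"
  using prime_P prime_ge_2_nat by blast

lemma P_strict_mono: "1 \<le> i \<Longrightarrow> i < j \<Longrightarrow> P i < P j"
  unfolding P_def using enumerate_mono[OF _ primes_infinite] by simp

lemma P_mono: "1 \<le> i \<Longrightarrow> i \<le> j \<Longrightarrow> P i \<le> P j"
  using P_strict_mono[of i j] by (cases "i = j") auto

lemma P_dvd_primorial: "1 \<le> i \<Longrightarrow> i \<le> j \<Longrightarrow> P i dvd primorial j"
  unfolding primorial_def by (intro dvd_prodI) auto

lemma primorial_dvd_primorial: "i \<le> j \<Longrightarrow> primorial i dvd primorial j"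
  unfolding primorial_def by (intro prod_dvd_prod_subset) auto

lemma P_not_dvd_primorial:
  assumes "j < i"
  shows "\<not> P i dvd primorial j"
proof
  assume "P i dvd primorial j"
  then obtain t where t: "t \<in> {1..j}" "P i dvd P t"
    unfolding primorial_def using prime_dvd_prod_iff[OF _ prime_P] by blast
  then have "P i = P t"
    using primes_dvd_imp_eq prime_P by blast
  moreover have "P t < P i"
    using t assms P_strict_mono by auto
  ultimately show False by simp
qed

lemma coprime_primorial_iff: "coprime x (primorial k) \<longleftrightarrow> (\<forall>i\<in>{1..k}. \<not> P i dvd x)"
proof
  assume "coprime x (primorial k)"
  then show "\<forall>i\<in>{1..k}. \<not> P i dvd x"
    using coprime_common_divisor P_dvd_primorial prime_P not_prime_unit
    by (metis atLeastAtMost_iff)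
next
  assume "\<forall>i\<in>{1..k}. \<not> P i dvd x"
  then show "coprime x (primorial k)"
    unfolding primorial_def
    by (intro prod_coprime_right) (metis atLeastAtMost_iff coprime_commute prime_imp_coprime prime_P)
qed

lemma card_multiples_in_linear_progression_le_1:
  fixes p q c n :: nat
  assumes "prime p" "\<not> p dvd q" "n \<le> p"
  shows "card {v. v < n \<and> p dvd c + v * q} \<le> 1"
proof -
  have le_imp_eq: "x = y" if "x \<le> y" "y < n" "p dvd c + x * q" "p dvd c + y * q" for x y
  proof -
    have "p dvd (c + y * q) - (c + x * q)"
      using that(4,3) by (rule dvd_diff_nat)
    also have "(c + y * q) - (c + x * q) = (y - x) * q"
      by (simp add: diff_mult_distrib)
    finally have "p dvd y - x"
      using assms(1,2) prime_dvd_mult_iff by blast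
    moreover have "y - x < p"
      using that(2) assms(3) by linarith
    ultimately have "y - x = 0"
      by (meson dvd_imp_le not_le neq0_conv)
    then show "x = y"
      using that(1) by simp
  qed
  have "x = y" if "x \<in> {v. v < n \<and> p dvd c + v * q}" "y \<in> {v. v < n \<and> p dvd c + v * q}" for x y
    using that le_imp_eq[of x y] le_imp_eq[of y x] by (cases "x \<le> y") auto
  then show ?thesis
    unfolding One_nat_def by (subst card_le_Suc0_iff_eq) auto
qed

lemma card_sieve_ge:
  fixes Q H :: "nat set" and c q n :: nat
  assumes "finite Q" "finite H" "\<And>p. p \<in> Q \<Longrightarrow> prime p \<and> \<not> p dvd q \<and> n \<le> p"
  shows "n - card Q * card H
    \<le> card {v. v < n \<and> (\<forall>p\<in>Q. \<forall>h\<in>H. \<not> p dvd c + h + v * q)}"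
proof -
  define B where "B p h = {v. v < n \<and> p dvd c + h + v * q}" for p h
  have "card (\<Union>p\<in>Q. \<Union>h\<in>H. B p h) \<le> (\<Sum>p\<in>Q. card (\<Union>h\<in>H. B p h))"
    using assms(1) by (rule card_UN_le)
  also have "\<dots> \<le> (\<Sum>p\<in>Q. \<Sum>h\<in>H. card (B p h))"
    using assms(2) by (intro sum_mono card_UN_le)
  also have "\<dots> \<le> (\<Sum>p\<in>Q. \<Sum>h\<in>H. 1)"
    unfolding B_def using assms(3)
    by (intro sum_mono card_multiples_in_linear_progression_le_1[of _ q n "c + h" for h]) auto
  finally have "card (\<Union>p\<in>Q. \<Union>h\<in>H. B p h) \<le> card Q * card H"
    by simp
  moreover have "{v. v < n \<and> (\<forall>p\<in>Q. \<forall>h\<in>H. \<not> p dvd c + h + v * q)}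
      = {..<n} - (\<Union>p\<in>Q. \<Union>h\<in>H. B p h)"
    unfolding B_def by auto
  moreover have "card {..<n} - card (\<Union>p\<in>Q. \<Union>h\<in>H. B p h)
      \<le> card ({..<n} - (\<Union>p\<in>Q. \<Union>h\<in>H. B p h))"
    using assms(1,2) unfolding B_def by (intro diff_card_le_card_Diff) auto
  ultimately show ?thesis
    by simp
qed

lemma card_mult_le_card_fun_upd:
  assumes "finite A" "finite B"
    and "\<And>f. f \<in> A \<Longrightarrow> f i = 0"
    and "\<And>f. f \<in> A \<Longrightarrow> finite (W f) \<and> c \<le> card (W f)"
    and "\<And>f v. f \<in> A \<Longrightarrow> v \<in> W f \<Longrightarrow> f(i := v) \<in> B"
  shows "card A * c \<le> card B"
proof -
  let ?ext = "\<lambda>(f, v). f(i := v)"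
  have "inj_on ?ext (Sigma A W)"
    by (rule inj_on_inverseI[where g = "\<lambda>F. (F(i := 0), F i)"]) (auto simp: assms(3))
  have "card A * c = (\<Sum>f\<in>A. c)"
    by simp
  also have "\<dots> \<le> (\<Sum>f\<in>A. card (W f))"
    using assms(4) by (intro sum_mono) blast
  also have "\<dots> = card (Sigma A W)"
    using assms(1,4) by (intro card_SigmaI[symmetric]) auto
  also have "\<dots> = card (?ext ` Sigma A W)"
    using card_image[OF \<open>inj_on ?ext (Sigma A W)\<close>] by simp
  also have "\<dots> \<le> card B"
    using assms(2,5) by (intro card_mono) auto
  finally show ?thesis .
qed

text \<open>The digits \<open>(m\<^sub>l\<^sub>+\<^sub>1, \<dots>, m\<^sub>j)\<close> are functions vanishing outside \<open>{l+1..j}\<close>; \<open>offset\<close> is the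
  number \<open>M\<close> they encode.\<close>

definition digit_tuples :: "nat \<Rightarrow> nat \<Rightarrow> (nat \<Rightarrow> nat) set" where
  "digit_tuples l j = {ms. (\<forall>i\<in>{l+1..j}. ms i < P i) \<and> (\<forall>i. i \<notin> {l+1..j} \<longrightarrow> ms i = 0)}"

definition offset :: "nat \<Rightarrow> nat \<Rightarrow> (nat \<Rightarrow> nat) \<Rightarrow> nat" where
  "offset l j ms = (\<Sum>i\<in>{l+1..j}. ms i * primorial (i - 1))"

lemma finite_digit_tuples: "finite (digit_tuples l j)"
proof (rule finite_subset)
  show "digit_tuples l j \<subseteq> {f. \<forall>i. (i \<in> {l+1..j} \<longrightarrow> f i \<in> {..P j}) \<and> (i \<notin> {l+1..j} \<longrightarrow> f i = 0)}"
  proof (intro subsetI CollectI allI conjI impI)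
    fix f i
    assume f: "f \<in> digit_tuples l j"
    show "f i = 0" if "i \<notin> {l+1..j}"
      using f that unfolding digit_tuples_def by blast
    show "f i \<in> {..P j}" if "i \<in> {l+1..j}"
      using f that P_mono[of i j] unfolding digit_tuples_def by fastforce
  qed
  show "finite \<dots>"
    by (rule finite_set_of_finite_funs) auto
qed

lemma offset_fun_upd:
  assumes "i \<in> {l+1..j}" "f i = 0"
  shows "offset l j (f(i := v)) = offset l j f + v * primorial (i - 1)"
proof -
  have "offset l j (f(i := v)) = v * primorial (i - 1) + (\<Sum>i'\<in>{l+1..j} - {i}. f i' * primorial (i' - 1))"
    using assms(1) unfolding offset_def by (simp add: sum.remove)
  also have "\<dots> = offset l j f + v * primorial (i - 1)"
    using assms unfolding offset_def by (simp add: sum.remove[of _ i])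
  finally show ?thesis .
qed

lemma P_dvd_add_offset_iff:
  assumes "l \<le> j" "j \<le> k" "1 \<le> i" "i \<le> j"
  shows "P i dvd x + offset l k f \<longleftrightarrow> P i dvd x + offset l j f"
proof -
  have "{l+1..k} = {l+1..j} \<union> {j+1..k}"
    using assms(1,2) by auto
  then have "offset l k f = offset l j f + (\<Sum>i'\<in>{j+1..k}. f i' * primorial (i' - 1))"
    unfolding offset_def by (simp add: sum.union_disjoint)
  moreover have "P i dvd (\<Sum>i'\<in>{j+1..k}. f i' * primorial (i' - 1))"
    using assms(3,4) by (intro dvd_sum dvd_mult dvd_trans[OF P_dvd_primorial primorial_dvd_primorial]) auto
  ultimately show ?thesis
    by (simp add: add.assoc[symmetric] dvd_add_left_iff)
qed

text \<open>\<open>a + M\<close> and \<open>a + g + M\<close> lie in the same residue class modulo \<open>p\<close> exactly when \<open>p\<close>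
  divides \<open>g\<close>.\<close>

definition admissible_residues :: "nat \<Rightarrow> nat \<Rightarrow> nat" where
  "admissible_residues g p = p - (if p dvd g then 1 else 2)"

definition surviving_tuples :: "nat \<Rightarrow> nat \<Rightarrow> nat \<Rightarrow> nat \<Rightarrow> (nat \<Rightarrow> nat) set" where
  "surviving_tuples l g a j = {ms \<in> digit_tuples l j. \<forall>i\<in>{l+1..j}.
     \<not> P i dvd a + offset l j ms \<and> \<not> P i dvd a + g + offset l j ms}"

lemma finite_surviving_tuples: "finite (surviving_tuples l g a j)"
  using finite_digit_tuples unfolding surviving_tuples_def by simp

lemma card_surviving_tuples_Suc:
  assumes "l \<le> j"
  shows "card (surviving_tuples l g a j) * admissible_residues g (P (Suc j))
    \<le> card (surviving_tuples l g a (Suc j))"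
proof (rule card_mult_le_card_fun_upd[OF finite_surviving_tuples finite_surviving_tuples])
  define p where "p = P (Suc j)"
  define W where "W f = {v. v < p \<and> (\<forall>p'\<in>{p}. \<forall>h\<in>{0, g}.
    \<not> p' dvd (a + offset l (Suc j) f) + h + v * primorial j)}" for f
  fix f
  assume f: "f \<in> surviving_tuples l g a j"
  then show f_Suc: "f (Suc j) = 0"
    unfolding surviving_tuples_def digit_tuples_def by simp
  have sieve: "p - card H \<le> card {v. v < p \<and> (\<forall>p'\<in>{p}. \<forall>h\<in>H.
    \<not> p' dvd (a + offset l (Suc j) f) + h + v * primorial j)}" if "finite H" for H
    using that card_sieve_ge[of "{p}" H "primorial j" p] P_not_dvd_primorial[of j "Suc j"] prime_P
    unfolding p_def by simp
  show "finite (W f) \<and> admissible_residues g p \<le> card (W f)"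
  proof (cases "p dvd g")
    case True
    then have "p dvd x + g + y \<longleftrightarrow> p dvd x + y" for x y
      by (metis add.commute add.left_commute dvd_add_right_iff)
    then have "W f = {v. v < p \<and> (\<forall>p'\<in>{p}. \<forall>h\<in>{0}.
      \<not> p' dvd (a + offset l (Suc j) f) + h + v * primorial j)}"
      unfolding W_def by auto
    then show ?thesis
      using True sieve[of "{0}"] by (simp add: W_def admissible_residues_def)
  next
    case False
    have "card {0, g} \<le> 2"
      by (simp add: card_insert_le_m1)
    then show ?thesis
      using False sieve[of "{0, g}"] by (simp add: W_def admissible_residues_def)
  qed
  fix v
  assume v: "v \<in> W f"
  have survives: "\<not> P i dvd a + h + offset l (Suc j) (f(Suc j := v))"
    if "i \<in> {l+1..Suc j}" "h \<in> {0, g}" for i h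
  proof (cases "i = Suc j")
    case True
    then show ?thesis
      using v that f_Suc assms unfolding W_def p_def by (auto simp: offset_fun_upd ac_simps)
  next
    case False
    have "offset l j (f(Suc j := v)) = offset l j f"
      unfolding offset_def by (intro sum.cong) auto
    then show ?thesis
      using f that False assms P_dvd_add_offset_iff[of l j "Suc j" i]
      unfolding surviving_tuples_def by auto
  qed
  have "f(Suc j := v) \<in> digit_tuples l (Suc j)"
    using f v assms unfolding surviving_tuples_def digit_tuples_def W_def p_def by (auto simp: le_Suc_eq)
  then show "f(Suc j := v) \<in> surviving_tuples l g a (Suc j)"
    unfolding surviving_tuples_def using survives[of _ 0] survives[of _ g] by auto
qed

lemma card_surviving_tuples_ge:
  assumes "l \<le> j"
  shows "(\<Prod>i\<in>{l+1..j}. admissible_residues g (P i)) \<le> card (surviving_tuples l g a j)"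
  using assms
proof (induction j rule: dec_induct)
  case base
  have "(\<lambda>_. 0) \<in> surviving_tuples l g a l"
    unfolding surviving_tuples_def digit_tuples_def by simp
  then have "surviving_tuples l g a l \<noteq> {}"
    by blast
  then show ?case
    using finite_surviving_tuples by (simp add: Suc_leI card_gt_0_iff)
next
  case (step j)
  have "{l+1..Suc j} = insert (Suc j) {l+1..j}"
    using step.hyps by auto
  then have "(\<Prod>i\<in>{l+1..Suc j}. admissible_residues g (P i))
    = admissible_residues g (P (Suc j)) * (\<Prod>i\<in>{l+1..j}. admissible_residues g (P i))"
    by simp
  also have "\<dots> \<le> admissible_residues g (P (Suc j)) * card (surviving_tuples l g a j)"
    using step.IH by simp
  also have "\<dots> \<le> card (surviving_tuples l g a (Suc j))"
    using card_surviving_tuples_Suc[OF step.hyps(1)] by (simp add: mult.commute)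
  finally show ?case .
qed

lemma nring_eq_prod:
  assumes "1 \<le> l"
  shows "nring l j g = real (\<Prod>i\<in>{l+1..j}. admissible_residues g (P i))"
proof -
  have P_ge_3: "3 \<le> P i" if "i \<in> {l+1..j}" for i
    using that assms P_strict_mono[of 1 i] P_ge_2[of 1] by auto
  have filter: "{i. l+1 \<le> i \<and> i \<le> j \<and> P i dvd g} = {i \<in> {l+1..j}. P i dvd g}"
    by auto
  have "nring l j g = (\<Prod>i\<in>{l+1..j}. real (P i) - 2) *
      (\<Prod>i\<in>{l+1..j}. if P i dvd g then (real (P i) - 1) / (real (P i) - 2) else 1)"
    unfolding nring_def filter prod.inter_filter[OF finite_atLeastAtMost] ..
  also have "\<dots> = (\<Prod>i\<in>{l+1..j}. if P i dvd g then real (P i) - 1 else real (P i) - 2)"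
    unfolding prod.distrib[symmetric] using P_ge_3 by (intro prod.cong) fastforce+
  also have "\<dots> = real (\<Prod>i\<in>{l+1..j}. admissible_residues g (P i))"
    unfolding of_nat_prod admissible_residues_def by (intro prod.cong refl) (simp add: of_nat_diff le_trans[OF _ P_ge_2])
  finally show ?thesis .
qed

lemma coprime_primorial_extension:
  assumes "cons_pair l g a" "f \<in> surviving_tuples l g a j" "l \<le> j" "j \<le> k" "h \<in> {0, g}"
    and "\<And>i. i \<le> j \<Longrightarrow> F i = f i"
    and "\<And>i h. i \<in> {j+1..k} \<Longrightarrow> h \<in> {0, g} \<Longrightarrow> \<not> P i dvd a + h + offset l k F"
  shows "coprime (a + h + offset l k F) (primorial k)"
  unfolding coprime_primorial_iff
proof
  fix i
  assume i: "i \<in> {1..k}"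
  consider "i \<le> l" | "l < i" "i \<le> j" | "j < i"
    by linarith
  then show "\<not> P i dvd a + h + offset l k F"
  proof cases
    case 1
    have "coprime (a + h) (primorial l)"
      using assms(1,5) unfolding cons_pair_def prospective_prime_def by auto
    then show ?thesis
      using 1 i assms(3,4) P_dvd_add_offset_iff[of l l k i "a + h" F]
      by (simp add: offset_def coprime_primorial_iff)
  next
    case 2
    have "offset l j F = offset l j f"
      unfolding offset_def using assms(6) by (intro sum.cong) auto
    then show ?thesis
      using 2 assms(2,4,5) P_dvd_add_offset_iff[of l j k i "a + h" F]
      unfolding surviving_tuples_def by auto
  next
    case 3
    then show ?thesis
      using i assms(5,7) by simp
  qed
qed

lemma card_surviving_tuples_mult_le_card_pairs:
  assumes "cons_pair l g a" "l \<le> j" "m < P (j + 2)" "m' < P (j + 3)"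
  shows "card (surviving_tuples l g a j) * (P (j + 1) - 6) \<le> card {ms \<in> digit_tuples l (j + 3).
    ms (j + 2) = m \<and> ms (j + 3) = m' \<and>
    coprime (a + offset l (j + 3) ms) (primorial (j + 3)) \<and>
    coprime (a + g + offset l (j + 3) ms) (primorial (j + 3))}"
    (is "_ \<le> card ?T")
proof -
  define k where "k = j + 3"
  define fix_top where "fix_top f = f(j + 2 := m, k := m')" for f :: "nat \<Rightarrow> nat"
  define W where "W f = {v. v < P (j + 1) \<and> (\<forall>p\<in>{P (j + 1), P (j + 2), P k}. \<forall>h\<in>{0, g}.
    \<not> p dvd (a + offset l k f) + h + v * primorial j)}" for f
  have vanish: "f i = 0" if "f \<in> surviving_tuples l g a j" "i \<notin> {l+1..j}" for f i
    using that unfolding surviving_tuples_def digit_tuples_def by auto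
  have "(fix_top f)(j + 2 := 0, k := 0) = f" if "f \<in> surviving_tuples l g a j" for f
    using vanish[OF that, of "j + 2"] vanish[OF that, of k] unfolding fix_top_def k_def
    by (simp add: fun_eq_iff)
  then have inj: "inj_on fix_top (surviving_tuples l g a j)"
    by (rule inj_on_inverseI[where g = "\<lambda>F. F(j + 2 := 0, k := 0)"])
  have "card (fix_top ` surviving_tuples l g a j) * (P (j + 1) - 6) \<le> card ?T"
  proof (rule card_mult_le_card_fun_upd)
    show "finite (fix_top ` surviving_tuples l g a j)"
      using finite_surviving_tuples by simp
    show "finite ?T"
      using finite_digit_tuples by simp
    fix f
    assume "f \<in> fix_top ` surviving_tuples l g a j"
    then obtain f0 where f0: "f0 \<in> surviving_tuples l g a j" and f: "f = fix_top f0"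
      by blast
    show "f (j + 1) = 0"
      using f vanish[OF f0] unfolding fix_top_def k_def by simp
    have "P (j + 1) - card {P (j + 1), P (j + 2), P k} * card {0, g} \<le> card (W f)"
      unfolding W_def using P_not_dvd_primorial prime_P P_mono
      by (intro card_sieve_ge) (auto simp: k_def)
    moreover have "card {P (j + 1), P (j + 2), P k} * card {0, g} \<le> 3 * 2"
      by (intro mult_le_mono) (auto simp: card_insert_if)
    ultimately show "finite (W f) \<and> P (j + 1) - 6 \<le> card (W f)"
      unfolding W_def by simp
    fix v
    assume v: "v \<in> W f"
    have f_upd: "offset l k (f(j + 1 := v)) = offset l k f + v * primorial j"
      using \<open>f (j + 1) = 0\<close> assms(2) by (subst offset_fun_upd) (auto simp: k_def)
    have new_primes: "\<not> P i dvd a + h + offset l k (f(j + 1 := v))"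
      if "i \<in> {j+1..k}" "h \<in> {0, g}" for i h
    proof -
      have "i = j + 1 \<or> i = j + 2 \<or> i = k"
        using that(1) unfolding k_def by auto
      then show ?thesis
        using v that(2) unfolding W_def f_upd by (auto simp: ac_simps)
    qed
    have coprime: "coprime (a + h + offset l k (f(j + 1 := v))) (primorial k)" if "h \<in> {0, g}" for h
      using assms(1) f0 assms(2) _ that _ new_primes
      by (rule coprime_primorial_extension) (auto simp: f fix_top_def k_def)
    have "v < P (j + 1)"
      using v unfolding W_def by simp
    moreover have "f0 i < P i" if "i \<in> {l+1..j}" for i
      using f0 that unfolding surviving_tuples_def digit_tuples_def by blast
    ultimately have "f(j + 1 := v) \<in> digit_tuples l k"
      using vanish[OF f0] assms(2-4)
      unfolding digit_tuples_def f fix_top_def k_def by (auto simp: not_le)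
    then show "f(j + 1 := v) \<in> ?T"
      using coprime[of 0] coprime[of g] unfolding f fix_top_def k_def by simp
  qed
  then show ?thesis
    by (simp add: card_image[OF inj])
qed

theorem lemma6:
  fixes g l a k m m' :: nat
  assumes "0 < g" and "1 \<le> l" and "cons_pair l g a"
    and "k > l + 4" and "m \<le> P (k - 1) - 1" and "m' \<le> P k - 1"
  shows "real (card {ms :: nat \<Rightarrow> nat.
            (\<forall>j\<in>{l+1..k}. ms j \<le> P j - 1) \<and> (\<forall>j. j \<notin> {l+1..k} \<longrightarrow> ms j = 0) \<and>
            ms (k - 1) = m \<and> ms k = m' \<and>
            coprime (a + (\<Sum>j\<in>{l+1..k}. ms j * primorial (j - 1))) (primorial k) \<and>
            coprime (a + g + (\<Sum>j\<in>{l+1..k}. ms j * primorial (j - 1))) (primorial k)})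
         \<ge> (real (P (k - 2)) - 6) * nring l (k - 3) g"
  (is "real (card ?T) \<ge> _")
proof -
  define j where "j = k - 3"
  have k: "k = j + 3" and "l \<le> j"
    using assms(4) unfolding j_def by auto
  have le_P_minus_1: "x \<le> P i - 1 \<longleftrightarrow> x < P i" for x i
    using P_ge_2[of i] by linarith
  have "?T = {ms \<in> digit_tuples l (j + 3). ms (j + 2) = m \<and> ms (j + 3) = m' \<and>
    coprime (a + offset l (j + 3) ms) (primorial (j + 3)) \<and>
    coprime (a + g + offset l (j + 3) ms) (primorial (j + 3))}"
    unfolding k digit_tuples_def offset_def le_P_minus_1 by (simp add: numeral_eq_Suc)
  then have card_T: "card (surviving_tuples l g a j) * (P (k - 2) - 6) \<le> card ?T"
    using card_surviving_tuples_mult_le_card_pairs[OF assms(3) \<open>l \<le> j\<close>] assms(5,6)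
    unfolding k le_P_minus_1 by (simp add: numeral_eq_Suc)
  have "(real (P (k - 2)) - 6) * nring l (k - 3) g
      \<le> real (P (k - 2) - 6) * real (\<Prod>i\<in>{l+1..j}. admissible_residues g (P i))"
    unfolding nring_eq_prod[OF assms(2)] j_def by (intro mult_right_mono of_nat_0_le_iff) auto
  also have "\<dots> \<le> real (P (k - 2) - 6) * real (card (surviving_tuples l g a j))"
    using card_surviving_tuples_ge[OF \<open>l \<le> j\<close>, of g a]
    by (intro mult_left_mono) (simp_all only: of_nat_le_iff of_nat_0_le_iff)
  also have "\<dots> \<le> real (card ?T)"
    using card_T by (simp flip: of_nat_mult add: mult.commute)
  finally show ?thesis .
qed

end
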